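(* There do not exist a Luzin set $L\subseteq\mathbb{R}$ and a Sierpiński set $S\subseteq\mathbb{R}$ such that $L+S=\{l+s:l\in L,s\in S\}$ is a Bernstein set.
   Context: A Luzin set is $L\subseteq\mathbb{R}$ with $|L|=\mathfrak{c}$ such that $L\cap M$ is countable for every meager $M$. A Sierpiński set is $S\subseteq\mathbb{R}$ with $|S|=\mathfrak{c}$ such that $S\cap N$ is countable for every Lebesgue-null $N$. A set $B\subseteq\mathbb{R}$ is a Bernstein set if for every nonempty perfect set $P\subseteq\mathbb{R}$ both $B\cap P\neq\emptyset$ and $(\mathbb{R}\setminus B)\cap P\neq\emptyset$. *)

theory Defs
  imports "HOL-Analysis.Analysis" "HOL-Library.Equipollence"
begin

definition nowhere_dense :: "real set \<Rightarrow> bool" where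
  "nowhere_dense A \<longleftrightarrow> interior (closure A) = {}"

definition meager :: "real set \<Rightarrow> bool" where
  "meager M \<longleftrightarrow> (\<exists>\<F>. countable \<F> \<and> (\<forall>A\<in>\<F>. nowhere_dense A) \<and> M \<subseteq> \<Union>\<F>)"

definition lebesgue_null :: "real set \<Rightarrow> bool" where
  "lebesgue_null N \<longleftrightarrow> N \<in> null_sets lebesgue"

definition perfect_set :: "real set \<Rightarrow> bool" where
  "perfect_set P \<longleftrightarrow> closed P \<and> (\<forall>x\<in>P. x islimpt P)"

definition luzin_set :: "real set \<Rightarrow> bool" where
  "luzin_set L \<longleftrightarrow> L \<approx> (UNIV :: real set) \<and> (\<forall>M. meager M \<longrightarrow> countable (L \<inter> M))"

definition sierpinski_set :: "real set \<Rightarrow> bool" where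
  "sierpinski_set S \<longleftrightarrow> S \<approx> (UNIV :: real set) \<and> (\<forall>N. lebesgue_null N \<longrightarrow> countable (S \<inter> N))"

definition bernstein_set :: "real set \<Rightarrow> bool" where
  "bernstein_set B \<longleftrightarrow> (\<forall>P. P \<noteq> {} \<and> perfect_set P \<longrightarrow> B \<inter> P \<noteq> {} \<and> (UNIV - B) \<inter> P \<noteq> {})"

end

theory Submission
  imports Defs
begin

text \<open>
  We construct a perfect set P (a Cantor set: sums of distinct powers 4^-(k+1)) and a
  comeager set G (a dense G-delta set built around the rationals) such that every translate
  of P is closed and null (hence meager and null) and the difference set P - G is null.
  If l + s lies in P with l \<in> L and s \<in> S, then either l \<notin> G, which happens for countably many
  l only (L is Luzin), and then s lies in the null set P - l; or l \<in> G, so s lies in the null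
  set P - G (countably many s, since S is Sierpinski) and l lies in the meager set P - s.
  Hence (L + S) \<inter> P is countable.  On the other hand P contains continuum many pairwise
  disjoint perfect sets, and a Bernstein set meets each of them, so it meets P in
  uncountably many points.
\<close>

text \<open>
  Base 4 leaves gaps between the two halves at every level, which makes the map injective
  and its image small.
\<close>
definition cantor_digit :: "(nat \<Rightarrow> bool) \<Rightarrow> nat \<Rightarrow> real" where
  "cantor_digit a k = (if a k then (1/4) ^ Suc k else 0)"

definition cantor_map :: "(nat \<Rightarrow> bool) \<Rightarrow> real" where
  "cantor_map a = (\<Sum>k. cantor_digit a k)"

definition cantor_partial :: "nat \<Rightarrow> (nat \<Rightarrow> bool) \<Rightarrow> real" where
  "cantor_partial m a = (\<Sum>k<m. cantor_digit a k)"

definition cantor_set :: "real set" where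
  "cantor_set = range cantor_map"

lemma summable_cantor_weights: "summable (\<lambda>k. (1/4::real) ^ Suc k)"
  by (simp add: summable_geometric)

lemma summable_cantor_digit: "summable (cantor_digit a)"
  by (rule summable_comparison_test'[OF summable_cantor_weights, of 0])
     (simp add: cantor_digit_def)

lemma cantor_tail_bounds:
  "cantor_partial m a \<le> cantor_map a" "cantor_map a \<le> cantor_partial m a + (1/4) ^ m / 3"
proof -
  have tail_summable: "summable (\<lambda>n. cantor_digit a (n + m))"
    using summable_cantor_digit by (simp add: summable_iff_shift)
  have split: "cantor_map a = (\<Sum>n. cantor_digit a (n + m)) + cantor_partial m a"
    unfolding cantor_map_def cantor_partial_def
    by (rule suminf_split_initial_segment[OF summable_cantor_digit])
  have weights: "(\<lambda>n. (1/4::real) ^ Suc (n + m)) = (\<lambda>n. (1/4) ^ Suc m * (1/4) ^ n)"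
    by (simp add: power_add mult_ac)
  have "(\<Sum>n. cantor_digit a (n + m)) \<le> (\<Sum>n. (1/4::real) ^ Suc (n + m))"
    using tail_summable summable_cantor_weights
    by (intro suminf_le) (auto simp: cantor_digit_def summable_iff_shift[where k = m])
  also have "\<dots> = (1/4) ^ m / 3"
    unfolding weights by (subst suminf_mult) (auto simp: suminf_geometric)
  finally show "cantor_map a \<le> cantor_partial m a + (1/4) ^ m / 3"
    using split by simp
  show "cantor_partial m a \<le> cantor_map a"
    using split suminf_nonneg[OF tail_summable] by (simp add: cantor_digit_def)
qed

lemma cantor_partial_cong:
  "(\<And>k. k < m \<Longrightarrow> a k = b k) \<Longrightarrow> cantor_partial m a = cantor_partial m b"
  unfolding cantor_partial_def cantor_digit_def by (intro sum.cong) auto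

lemma continuous_cantor_map: "continuous_on UNIV cantor_map"
proof -
  have "uniform_limit UNIV (\<lambda>n a. \<Sum>k<n. cantor_digit a k) cantor_map sequentially"
    unfolding cantor_map_def
    by (rule Weierstrass_m_test[OF _ summable_cantor_weights]) (simp add: cantor_digit_def)
  moreover have "continuous_on UNIV (\<lambda>a. cantor_digit a k)" for k
  proof -
    have "continuous_on UNIV ((\<lambda>b. if b then (1/4::real) ^ Suc k else 0) \<circ> (\<lambda>a. a k))"
      by (intro continuous_on_compose continuous_on_product_coordinates) simp
    then show ?thesis by (simp add: cantor_digit_def o_def)
  qed
  ultimately show ?thesis
    by (intro uniform_limit_theorem) (auto intro!: always_eventually continuous_on_sum)
qed

lemma compact_UNIV_nat_bool: "compact (UNIV :: (nat \<Rightarrow> bool) set)"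
proof -
  have "compact_space (product_topology (\<lambda>i::nat. (euclidean :: bool topology)) UNIV)"
    by (subst compact_space_product_topology) (auto simp: compact_space_def intro: finite_imp_compact)
  then show ?thesis
    by (metis compact_space_def compactin_euclidean_iff euclidean_product_topology topspace_euclidean)
qed

lemma compact_cantor_set: "compact cantor_set"
  unfolding cantor_set_def
  by (intro compact_continuous_image continuous_cantor_map compact_UNIV_nat_bool)

text \<open>
  At the first differing digit the sequence with a 1 has the larger value: the gap
  4^-(j+1) exceeds the whole remaining tail 4^-(j+1) / 3.
\<close>
lemma cantor_map_less:
  assumes "\<not> a j" "b j" "\<And>k. k < j \<Longrightarrow> a k = b k"
  shows "cantor_map a < cantor_map b"
proof -
  have "cantor_partial (Suc j) b = cantor_partial (Suc j) a + (1/4) ^ Suc j"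
    using assms cantor_partial_cong[OF assms(3)]
    by (simp add: cantor_partial_def cantor_digit_def)
  moreover have "(0::real) < (1/4) ^ Suc j" by simp
  ultimately show ?thesis
    using cantor_tail_bounds[where m = "Suc j" and a = a] cantor_tail_bounds[where m = "Suc j" and a = b]
    by linarith
qed

lemma inj_cantor_map: "inj cantor_map"
proof (rule injI, rule ccontr)
  fix a b assume eq: "cantor_map a = cantor_map b" and "a \<noteq> b"
  then obtain k where "a k \<noteq> b k" by auto
  then obtain j where j: "a j \<noteq> b j" "\<And>k. k < j \<Longrightarrow> a k = b k"
    using exists_least_iff[of "\<lambda>k. a k \<noteq> b k"] by blast
  show False
    using cantor_map_less[of a j b] cantor_map_less[of b j a] j eq by (cases "a j") auto
qed

lemma cantor_partial_values:
  "finite (range (cantor_partial m))" "card (range (cantor_partial m)) \<le> 2 ^ m"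
proof -
  let ?value = "\<lambda>B. \<Sum>k\<in>B. (1/4::real) ^ Suc k"
  have "range (cantor_partial m) \<subseteq> ?value ` Pow {..<m}"
  proof
    fix y assume "y \<in> range (cantor_partial m)"
    then obtain a where "y = cantor_partial m a" by auto
    then have "y = ?value {k \<in> {..<m}. a k}"
      using sum.inter_filter[of "{..<m}" "\<lambda>k. (1/4::real) ^ Suc k" a]
      by (simp add: cantor_partial_def cantor_digit_def)
    then show "y \<in> ?value ` Pow {..<m}" by blast
  qed
  moreover have "finite (?value ` Pow {..<m})" by simp
  moreover have "card (?value ` Pow {..<m}) \<le> 2 ^ m"
    using card_image_le[of "Pow {..<m}" ?value] by (simp add: card_Pow)
  ultimately show "finite (range (cantor_partial m))" "card (range (cantor_partial m)) \<le> 2 ^ m"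
    by (meson card_mono finite_subset order_trans)+
qed

lemma cantor_set_cover:
  "cantor_set \<subseteq> (\<Union>c\<in>range (cantor_partial m). {c + 0 .. c + (1/4) ^ m / 3})"
  using cantor_tail_bounds by (fastforce simp: cantor_set_def)

lemma emeasure_interval_translates:
  fixes C :: "real set"
  assumes "finite C" "card C \<le> K" "\<alpha> \<le> \<beta>"
  shows "emeasure lborel (\<Union>c\<in>C. {c + \<alpha> .. c + \<beta>}) \<le> ennreal (real K * (\<beta> - \<alpha>))"
proof -
  have "emeasure lborel (\<Union>c\<in>C. {c + \<alpha> .. c + \<beta>}) \<le> (\<Sum>c\<in>C. emeasure lborel {c + \<alpha> .. c + \<beta>})"
    using assms by (intro emeasure_subadditive_finite) auto
  also have "\<dots> = ennreal (real (card C) * (\<beta> - \<alpha>))"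
    using assms by (simp add: ennreal_of_nat_eq_real_of_nat ennreal_mult)
  also have "\<dots> \<le> ennreal (real K * (\<beta> - \<alpha>))"
    using assms by (intro ennreal_leI mult_right_mono) auto
  finally show ?thesis .
qed

lemma null_if_shrinking_covers:
  assumes "\<And>n. X \<subseteq> Y n" "\<And>n. Y n \<in> sets lborel"
    and "\<And>n. emeasure lborel (Y n) \<le> ennreal (c * (1/2) ^ n)"
  shows "X \<in> null_sets lebesgue"
proof -
  have bound: "emeasure lborel (\<Inter>n. Y n) \<le> ennreal (c * (1/2) ^ n)" for n
    by (rule order_trans[OF emeasure_mono[OF _ assms(2)] assms(3)]) blast
  have "(\<lambda>n. ennreal (c * (1/2) ^ n)) \<longlonglongrightarrow> ennreal (c * 0)"
    by (intro tendsto_ennrealI tendsto_mult tendsto_const LIMSEQ_power_zero) simp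
  then have "emeasure lborel (\<Inter>n. Y n) \<le> 0"
    using bound by (intro LIMSEQ_le_const) auto
  then have "(\<Inter>n. Y n) \<in> null_sets lborel"
    using assms(2) by (auto simp: null_sets_def)
  moreover have "X \<subseteq> (\<Inter>n. Y n)" using assms(1) by blast
  ultimately show ?thesis
    by (blast intro: null_sets_completionI null_sets_completion_subset)
qed

text \<open>
  The Cantor set has measure at most 2^m 4^-m / 3 for every m, hence is null.
\<close>
lemma cantor_set_null: "cantor_set \<in> null_sets lebesgue"
proof (rule null_if_shrinking_covers[OF cantor_set_cover])
  fix n
  show "(\<Union>c\<in>range (cantor_partial n). {c + 0 .. c + (1/4) ^ n / 3}) \<in> sets lborel"
    using cantor_partial_values by (intro sets.finite_UN) auto
  have "emeasure lborel (\<Union>c\<in>range (cantor_partial n). {c + 0 .. c + (1/4) ^ n / 3})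
      \<le> ennreal (real (2 ^ n) * ((1/4) ^ n / 3 - 0))"
    by (rule emeasure_interval_translates[OF cantor_partial_values]) simp
  also have "\<dots> \<le> ennreal (1 * (1/2) ^ n)"
    by (intro ennreal_leI) (simp add: power_mult_distrib[symmetric])
  finally show "emeasure lborel (\<Union>c\<in>range (cantor_partial n). {c + 0 .. c + (1/4) ^ n / 3})
      \<le> ennreal (1 * (1/2) ^ n)" .
qed

text \<open>
  Fixing the even digits by x gives a slice of the Cantor set; distinct x give disjoint
  slices, and free odd digits make each slice perfect.
\<close>
definition cantor_slice :: "(nat \<Rightarrow> bool) \<Rightarrow> real set" where
  "cantor_slice x = cantor_map ` {a. \<forall>k. a (2 * k) = x k}"

lemma cantor_slice_subset: "cantor_slice x \<subseteq> cantor_set"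
  by (auto simp: cantor_slice_def cantor_set_def)

lemma cantor_slice_nonempty: "cantor_slice x \<noteq> {}"
proof -
  have "(\<lambda>k. even k \<and> x (k div 2)) \<in> {a. \<forall>k. a (2 * k) = x k}" by simp
  then have "cantor_map (\<lambda>k. even k \<and> x (k div 2)) \<in> cantor_slice x"
    unfolding cantor_slice_def by (rule imageI)
  then show ?thesis by blast
qed

lemma cantor_slices_disjoint: "x \<noteq> y \<Longrightarrow> cantor_slice x \<inter> cantor_slice y = {}"
  by (fastforce simp: cantor_slice_def dest: injD[OF inj_cantor_map])

lemma perfect_cantor_slice: "perfect_set (cantor_slice x)"
  unfolding perfect_set_def
proof (intro conjI ballI)
  let ?D = "{a. \<forall>k. a (2 * k) = x k}"
  have "?D = (\<Inter>k. {a. a (2 * k) = x k})" by auto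
  moreover have "closed {a::nat \<Rightarrow> bool. a (2 * k) = x k}" for k
    by (intro closed_Collect_eq continuous_on_product_coordinates continuous_on_const)
  ultimately have "closed ?D" by (simp add: closed_INT)
  then have "compact ?D" using closed_Int_compact[OF _ compact_UNIV_nat_bool] by simp
  then show "closed (cantor_slice x)" unfolding cantor_slice_def
    by (intro compact_imp_closed compact_continuous_image continuous_on_subset[OF continuous_cantor_map]) auto
  fix y assume "y \<in> cantor_slice x"
  then obtain a where a: "a \<in> ?D" "y = cantor_map a" by (auto simp: cantor_slice_def)
  show "y islimpt cantor_slice x"
    unfolding islimpt_approachable
  proof (intro allI impI)
    fix e :: real assume "0 < e"
    then obtain m where m: "(1/4::real) ^ m < e" using real_arch_pow_inv[of e "1/4"] by auto
    \<comment> \<open>flip an odd digit beyond position m: this stays in the slice and moves the point slightly\<close>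
    define b where "b = a(2 * m + 1 := \<not> a (2 * m + 1))"
    have "2 * k \<noteq> 2 * m + 1" for k :: nat by presburger
    then have "b \<in> ?D" using a(1) by (simp add: b_def)
    moreover have "b (2 * m + 1) \<noteq> a (2 * m + 1)" by (simp add: b_def)
    then have "cantor_map b \<noteq> cantor_map a" by (metis injD[OF inj_cantor_map])
    moreover have "cantor_partial (2 * m + 1) b = cantor_partial (2 * m + 1) a"
      by (intro cantor_partial_cong) (simp add: b_def)
    moreover have "(1/4::real) ^ (2 * m + 1) \<le> (1/4) ^ m" by (intro power_decreasing) auto
    ultimately show "\<exists>z\<in>cantor_slice x. z \<noteq> y \<and> dist z y < e"
      using a m cantor_tail_bounds[where m = "2 * m + 1" and a = a]
        cantor_tail_bounds[where m = "2 * m + 1" and a = b]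
      by (intro bexI[of _ "cantor_map b"]) (auto simp: dist_real_def cantor_slice_def)
  qed
qed

lemma uncountable_UNIV_nat_bool: "uncountable (UNIV :: (nat \<Rightarrow> bool) set)"
proof -
  have "(\<lambda>n. \<not> f n n) \<notin> range f" for f :: "nat \<Rightarrow> nat \<Rightarrow> bool"
  proof
    assume "(\<lambda>n. \<not> f n n) \<in> range f"
    then obtain m where "(\<lambda>n. \<not> f n n) = f m" by auto
    then have "(\<not> f m m) = f m m" by (rule fun_cong)
    then show False by simp
  qed
  then show ?thesis unfolding uncountable_def by (metis UNIV_I UNIV_not_empty)
qed

text \<open>
  A closed null set has empty interior, as nonempty open sets have positive measure.
\<close>
lemma nowhere_dense_if_closed_null:
  assumes "closed T" "T \<in> null_sets lebesgue"
  shows "nowhere_dense T"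
proof -
  have "negligible (interior T)"
    using assms(2) interior_subset negligible_subset negligible_iff_null_sets by metis
  then have "interior T = {}" using open_not_negligible open_interior by blast
  then show ?thesis using assms(1) by (simp add: nowhere_dense_def closure_closed)
qed

lemma meager_if_nowhere_dense: "nowhere_dense A \<Longrightarrow> meager A"
  unfolding meager_def by (intro exI[of _ "{A}"]) auto

lemma null_translate: "S \<in> null_sets lebesgue \<Longrightarrow> (\<lambda>p. p - t) ` S \<in> null_sets lebesgue"
  using negligible_translation[of S "- t"] by (simp add: negligible_iff_null_sets)

lemma cantor_translates_small:
  "lebesgue_null ((\<lambda>p. p - t) ` cantor_set)" "meager ((\<lambda>p. p - t) ` cantor_set)"
proof -
  show null: "lebesgue_null ((\<lambda>p. p - t) ` cantor_set)"
    unfolding lebesgue_null_def by (rule null_translate[OF cantor_set_null])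
  have "closed ((\<lambda>p. p - t) ` cantor_set)"
    by (intro compact_imp_closed compact_translation_subtract compact_cantor_set)
  then show "meager ((\<lambda>p. p - t) ` cantor_set)"
    using null by (intro meager_if_nowhere_dense nowhere_dense_if_closed_null)
                  (auto simp: lebesgue_null_def)
qed

definition rat_enum :: "nat \<Rightarrow> real" where
  "rat_enum = from_nat_into \<rat>"

definition rat_cover :: "nat \<Rightarrow> real set" where
  "rat_cover n = (\<Union>k. ball (rat_enum k) ((1/4) ^ (n + k)))"

definition dense_core :: "real set" where
  "dense_core = (\<Inter>n. rat_cover n)"

lemma rats_subset_rat_cover: "\<rat> \<subseteq> rat_cover n"
proof
  fix r :: real assume "r \<in> \<rat>"
  then obtain k where "rat_enum k = r"
    unfolding rat_enum_def using from_nat_into_surj[OF countable_rat] by blast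
  then show "r \<in> rat_cover n" unfolding rat_cover_def by (intro UN_I[of k]) auto
qed

lemma nowhere_dense_compl_if_rats_subset:
  assumes "open U" "\<rat> \<subseteq> U"
  shows "nowhere_dense (UNIV - U)"
proof -
  have "closure U = UNIV" using closure_mono[OF assms(2)] Rats_closure_real by blast
  then have "interior (- U) = {}" by (simp add: interior_complement)
  moreover have "closed (- U)" using assms(1) by (simp add: closed_Compl)
  ultimately show ?thesis by (simp add: nowhere_dense_def Compl_eq_Diff_UNIV[symmetric])
qed

lemma meager_compl_dense_core: "meager (UNIV - dense_core)"
  unfolding meager_def
proof (intro exI[of _ "range (\<lambda>n. UNIV - rat_cover n)"] conjI ballI)
  show "countable (range (\<lambda>n. UNIV - rat_cover n))" by simp
  show "UNIV - dense_core \<subseteq> \<Union> (range (\<lambda>n. UNIV - rat_cover n))"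
    by (auto simp: dense_core_def)
  fix A assume "A \<in> range (\<lambda>n. UNIV - rat_cover n)"
  then obtain n where "A = UNIV - rat_cover n" by blast
  moreover have "open (rat_cover n)" by (simp add: rat_cover_def open_UN)
  ultimately show "nowhere_dense A"
    by (simp add: nowhere_dense_compl_if_rats_subset rats_subset_rat_cover)
qed

text \<open>
  Subtracting from the Cantor set a ball of radius 4^-m around q stays within 2^m
  intervals of length 7/3 4^-m, i.e. of total length 7/3 2^-m.
\<close>
definition cantor_shift_cover :: "nat \<Rightarrow> real \<Rightarrow> real set" where
  "cantor_shift_cover m q =
     (\<Union>c\<in>range (cantor_partial m). {c + (- q - (1/4) ^ m) .. c + (- q + 4/3 * (1/4) ^ m)})"

lemma cantor_minus_ball_subset:
  assumes "p \<in> cantor_set" "dist q g < (1/4) ^ m"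
  shows "p - g \<in> cantor_shift_cover m q"
proof -
  have "p \<in> (\<Union>c\<in>range (cantor_partial m). {c + 0 .. c + (1/4) ^ m / 3})"
    using cantor_set_cover assms(1) by blast
  then obtain c where c: "c \<in> range (cantor_partial m)" "c \<le> p" "p \<le> c + (1/4) ^ m / 3"
    by auto
  show ?thesis unfolding cantor_shift_cover_def
    using c assms(2) by (intro UN_I[OF c(1)]) (auto simp: dist_real_def)
qed

lemma cantor_shift_cover_measure:
  "cantor_shift_cover m q \<in> sets lborel"
  "emeasure lborel (cantor_shift_cover m q) \<le> ennreal (7/3 * (1/2) ^ m)"
proof -
  show "cantor_shift_cover m q \<in> sets lborel"
    unfolding cantor_shift_cover_def using cantor_partial_values by (intro sets.finite_UN) auto
  have "emeasure lborel (cantor_shift_cover m q)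
      \<le> ennreal (real (2 ^ m) * ((- q + 4/3 * (1/4) ^ m) - (- q - (1/4) ^ m)))"
    unfolding cantor_shift_cover_def
    by (rule emeasure_interval_translates[OF cantor_partial_values]) simp
  also have "real (2 ^ m) * ((- q + 4/3 * (1/4) ^ m) - (- q - (1/4) ^ m)) = 7/3 * (2 ^ m * (1/4) ^ m)"
    by (simp add: algebra_simps)
  also have "(2::real) ^ m * (1/4) ^ m = (1/2) ^ m"
    by (simp add: power_mult_distrib[symmetric])
  finally show "emeasure lborel (cantor_shift_cover m q) \<le> ennreal (7/3 * (1/2) ^ m)" .
qed

text \<open>
  The difference set P - G is null: for each n it is covered by the union over k of
  the sets above for the k-th rational at level n + k, of total measure at most 5 2^-n.
\<close>
lemma null_cantor_minus_dense_core:
  "lebesgue_null {p - g | p g. p \<in> cantor_set \<and> g \<in> dense_core}"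
proof -
  define Y where "Y n = (\<Union>k. cantor_shift_cover (n + k) (rat_enum k))" for n
  have "{p - g | p g. p \<in> cantor_set \<and> g \<in> dense_core} \<subseteq> Y n" for n
  proof safe
    fix p g assume p: "p \<in> cantor_set" and "g \<in> dense_core"
    then have "g \<in> rat_cover n" by (auto simp: dense_core_def)
    then obtain k where "dist (rat_enum k) g < (1/4) ^ (n + k)" by (auto simp: rat_cover_def)
    then show "p - g \<in> Y n" using cantor_minus_ball_subset[OF p] by (auto simp: Y_def)
  qed
  moreover have "Y n \<in> sets lborel" for n
    using cantor_shift_cover_measure(1) by (auto simp: Y_def)
  moreover have "emeasure lborel (Y n) \<le> ennreal (5 * (1/2) ^ n)" for n
  proof -
    have geometric: "(\<lambda>k. 7/3 * (1/2::real) ^ (n + k)) = (\<lambda>k. 7/3 * (1/2) ^ n * (1/2) ^ k)"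
      by (simp add: power_add mult_ac)
    have summable: "summable (\<lambda>k. 7/3 * (1/2::real) ^ (n + k))"
      unfolding geometric by (intro summable_mult summable_geometric) simp
    have "emeasure lborel (Y n) \<le> (\<Sum>k. emeasure lborel (cantor_shift_cover (n + k) (rat_enum k)))"
      unfolding Y_def using cantor_shift_cover_measure(1)
      by (intro emeasure_subadditive_countably) auto
    also have "\<dots> \<le> (\<Sum>k. ennreal (7/3 * (1/2) ^ (n + k)))"
      by (intro suminf_le cantor_shift_cover_measure(2)) auto
    also have "\<dots> = ennreal (\<Sum>k. 7/3 * (1/2) ^ (n + k))"
      by (rule suminf_ennreal2[OF _ summable]) simp
    also have "(\<Sum>k. 7/3 * (1/2::real) ^ (n + k)) = 14/3 * (1/2) ^ n"
      unfolding geometric by (subst suminf_mult) (simp_all add: suminf_geometric)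
    also have "ennreal (14/3 * (1/2) ^ n) \<le> ennreal (5 * (1/2) ^ n)"
      by (intro ennreal_leI) simp
    finally show ?thesis .
  qed
  ultimately show ?thesis
    unfolding lebesgue_null_def by (rule null_if_shrinking_covers)
qed

lemma countable_sumset_inter:
  assumes L: "\<And>M. meager M \<Longrightarrow> countable (L \<inter> M)"
    and S: "\<And>N. lebesgue_null N \<Longrightarrow> countable (S \<inter> N)"
    and G: "meager (UNIV - G)" "lebesgue_null {p - g | p g. p \<in> P \<and> g \<in> G}"
    and P: "\<And>t. meager ((\<lambda>p. p - t) ` P)" "\<And>t. lebesgue_null ((\<lambda>p. p - t) ` P)"
  shows "countable ({l + s | l s. l \<in> L \<and> s \<in> S} \<inter> P)"
proof -
  define N where "N = {p - g | p g. p \<in> P \<and> g \<in> G}"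
  \<comment> \<open>a point l + s of P is witnessed either by l outside G or by s inside N\<close>
  have "{l + s | l s. l \<in> L \<and> s \<in> S} \<inter> P
      \<subseteq> (\<Union>l\<in>L \<inter> (UNIV - G). (\<lambda>s. l + s) ` (S \<inter> (\<lambda>p. p - l) ` P))
        \<union> (\<Union>s\<in>S \<inter> N. (\<lambda>l. l + s) ` (L \<inter> (\<lambda>p. p - s) ` P))"
  proof safe
    fix l s assume ls: "l \<in> L" "s \<in> S" "l + s \<in> P"
      and "l + s \<notin> (\<Union>s\<in>S \<inter> N. (\<lambda>l. l + s) ` (L \<inter> (\<lambda>p. p - s) ` P))"
    then have "l \<notin> G" by (force simp: N_def)
    moreover have "s \<in> (\<lambda>p. p - l) ` P" using ls(3) by force
    ultimately show "l + s \<in> (\<Union>l\<in>L \<inter> (UNIV - G). (\<lambda>s. l + s) ` (S \<inter> (\<lambda>p. p - l) ` P))"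
      using ls by blast
  qed
  moreover have "countable (\<Union>l\<in>L \<inter> (UNIV - G). (\<lambda>s. l + s) ` (S \<inter> (\<lambda>p. p - l) ` P))"
    by (intro countable_UN[OF L[OF G(1)]] countable_image S[OF P(2)])
  moreover have "countable (\<Union>s\<in>S \<inter> N. (\<lambda>l. l + s) ` (L \<inter> (\<lambda>p. p - s) ` P))"
    using G(2) unfolding N_def[symmetric]
    by (intro countable_UN[OF S] countable_image L[OF P(1)])
  ultimately show ?thesis by (meson countable_Un countable_subset)
qed

lemma bernstein_inter_uncountable:
  assumes "bernstein_set B" "uncountable I" "disjoint_family_on Q I"
    and Q: "\<And>i. i \<in> I \<Longrightarrow> Q i \<noteq> {} \<and> perfect_set (Q i) \<and> Q i \<subseteq> P"
  shows "uncountable (B \<inter> P)"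
proof
  assume countable: "countable (B \<inter> P)"
  have "\<exists>c. c \<in> B \<inter> Q i" if "i \<in> I" for i
    using assms(1) Q[OF that] unfolding bernstein_set_def by blast
  then obtain c where c: "\<And>i. i \<in> I \<Longrightarrow> c i \<in> B \<inter> Q i" by metis
  \<comment> \<open>choosing a point of B in each Q i is injective since the Q i are disjoint\<close>
  have "inj_on c I"
    using c assms(3) by (fastforce simp: inj_on_def disjoint_family_on_def)
  moreover have "c ` I \<subseteq> B \<inter> P" using c Q by blast
  ultimately have "countable I"
    using countable countable_subset countable_image_inj_on by blast
  with assms(2) show False by contradiction
qed

theorem mainTheorem20:
  shows "\<not> (\<exists>L S. luzin_set L \<and> sierpinski_set S \<and> bernstein_set {l + s | l s. l \<in> L \<and> s \<in> S})"
proof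
  assume "\<exists>L S. luzin_set L \<and> sierpinski_set S \<and> bernstein_set {l + s | l s. l \<in> L \<and> s \<in> S}"
  then obtain L S where L: "luzin_set L" and S: "sierpinski_set S"
    and B: "bernstein_set {l + s | l s. l \<in> L \<and> s \<in> S}" by blast
  have "countable ({l + s | l s. l \<in> L \<and> s \<in> S} \<inter> cantor_set)"
    using L S unfolding luzin_set_def sierpinski_set_def
    by (intro countable_sumset_inter[OF _ _ meager_compl_dense_core null_cantor_minus_dense_core
          cantor_translates_small(2) cantor_translates_small(1)]) auto
  moreover have "uncountable ({l + s | l s. l \<in> L \<and> s \<in> S} \<inter> cantor_set)"
    using B uncountable_UNIV_nat_bool
    by (rule bernstein_inter_uncountable[where Q = cantor_slice])
       (auto simp: disjoint_family_on_def cantor_slices_disjoint cantor_slice_nonempty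
                   perfect_cantor_slice cantor_slice_subset)
  ultimately show False by contradiction
qed

end
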